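(* Let $\nu_0,\nu_1,\nu_2,\dots$ be probability measures on $[0,1]$ with $\nu_n\ll\nu_0$ for all $n\ge1$, and suppose $\sum_{n=1}^\infty d(\nu_n,\nu_0)<\infty$ for some $d\in\mathcal{D}$. Then the product measures on $[0,1]^{\mathbb{N}}$ satisfy $\prod_{n=1}^\infty\nu_n\ll\prod_{n=1}^\infty\nu_0$.
   Context: $\nu\ll\nu'$ denotes absolute continuity. Hellinger integral: for probability measures $\nu,\nu'$ on $[0,1]$, $H(\nu,\nu')=\int_{[0,1]}\sqrt{\frac{d\nu}{d\tau}\frac{d\nu'}{d\tau}}\,d\tau$ for any measure $\tau$ with $\nu,\nu'\ll\tau$. Class $\mathcal{D}$: a function $d$ on pairs of probability measures on $[0,1]$ which is either a divergence ($d(\nu,\nu')\ge0$ with equality iff $\nu=\nu'$) or a distance (metric) belongs to $\mathcal{D}$ if there is a constant $C>0$ with $1-H(\nu,\nu')\le C\,d(\nu,\nu')$ for all $\nu,\nu'$. *)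

theory Defs
  imports "HOL-Probability.Probability"
begin

definition unit_borel :: "real measure" where
  "unit_borel = restrict_space borel {0..1}"

definition prob_on_unit :: "real measure \<Rightarrow> bool" where
  "prob_on_unit \<nu> \<longleftrightarrow> prob_space \<nu> \<and> sets \<nu> = sets unit_borel"

definition dom_measure :: "real measure \<Rightarrow> real measure \<Rightarrow> real measure" where
  "dom_measure \<nu> \<nu>' = measure_of (space \<nu>) (sets \<nu>) (\<lambda>A. emeasure \<nu> A + emeasure \<nu>' A)"

definition hellinger :: "real measure \<Rightarrow> real measure \<Rightarrow> real" where
  "hellinger \<nu> \<nu>' = enn2real (\<integral>\<^sup>+ x. ennreal (sqrt (enn2real (RN_deriv (dom_measure \<nu> \<nu>') \<nu> x)
        * enn2real (RN_deriv (dom_measure \<nu> \<nu>') \<nu>' x))) \<partial>(dom_measure \<nu> \<nu>'))"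

definition is_divergence :: "(real measure \<Rightarrow> real measure \<Rightarrow> ereal) \<Rightarrow> bool" where
  "is_divergence d \<longleftrightarrow> (\<forall>\<nu> \<nu>'. prob_on_unit \<nu> \<longrightarrow> prob_on_unit \<nu>' \<longrightarrow>
      d \<nu> \<nu>' \<ge> 0 \<and> (d \<nu> \<nu>' = 0 \<longleftrightarrow> \<nu> = \<nu>'))"

definition is_distance :: "(real measure \<Rightarrow> real measure \<Rightarrow> ereal) \<Rightarrow> bool" where
  "is_distance d \<longleftrightarrow> (\<forall>\<nu> \<nu>' \<nu>''. prob_on_unit \<nu> \<longrightarrow> prob_on_unit \<nu>' \<longrightarrow> prob_on_unit \<nu>'' \<longrightarrow>
      \<bar>d \<nu> \<nu>'\<bar> \<noteq> \<infinity> \<and> d \<nu> \<nu>' \<ge> 0 \<and> (d \<nu> \<nu>' = 0 \<longleftrightarrow> \<nu> = \<nu>') \<and> d \<nu> \<nu>' = d \<nu>' \<nu>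
      \<and> d \<nu> \<nu>'' \<le> d \<nu> \<nu>' + d \<nu>' \<nu>'')"

definition class_D :: "(real measure \<Rightarrow> real measure \<Rightarrow> ereal) \<Rightarrow> bool" where
  "class_D d \<longleftrightarrow> (is_divergence d \<or> is_distance d) \<and>
     (\<exists>C>0. \<forall>\<nu> \<nu>'. prob_on_unit \<nu> \<longrightarrow> prob_on_unit \<nu>' \<longrightarrow>
        ereal (1 - hellinger \<nu> \<nu>') \<le> ereal C * d \<nu> \<nu>')"

end

theory Submission
  imports Defs
begin

(* Write \<nu>_n = f_n \<nu>_0. The Hellinger integral H(\<nu>_n, \<nu>_0) is the affinity
   \<rho>_n = \<integral> sqrt f_n d\<nu>_0, so the assumption on d makes \<Sum> (1 - \<rho>_n) finite.
   Let P = \<Pi> \<nu>_n, P_0 = \<Pi> \<nu>_0, and let Q_N be the measure with density \<Pi>_{n \<le> N} f_n(x_n)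
   with respect to P_0, so Q_N << P_0. If a cylinder B depends only on coordinates n \<le> K
   (with K \<ge> N), its P- and Q_N-measures are integrals of densities p, q over B, and
   integrating p 1_B \<le> 2 q 1_B + 2 (sqrt p - sqrt q)^2 gives
     P(B) \<le> 2 Q_N(B) + 4 (1 - \<Pi>_{N < n \<le> K} \<rho>_n) \<le> 2 Q_N(B) + 4 \<Sum>_{n > N} (1 - \<rho>_n).
   Cylinders approximate every measurable set simultaneously for P and Q_N, so a P_0-null
   set A satisfies P(A) \<le> 4 \<Sum>_{n > N} (1 - \<rho>_n) for all N, hence P(A) = 0. *)

lemma ennreal_one_plus_mult_divide:
  fixes a b :: real
  assumes "0 \<le> a" "0 \<le> b"
  shows "(1 + ennreal a) * ennreal (b / (1 + a)) = ennreal b"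
proof -
  have "ennreal (1 + a) * ennreal (b / (1 + a)) = ennreal ((1 + a) * (b / (1 + a)))"
    using assms by (intro ennreal_mult[symmetric]) auto
  then show ?thesis using assms by (simp add: ennreal_plus)
qed

text \<open>\<^const>\<open>dom_measure\<close> is typed for measures on the reals only, but the approximation
  argument needs the same construction on the product space.\<close>

definition sum_measure :: "'a measure \<Rightarrow> 'a measure \<Rightarrow> 'a measure" where
  "sum_measure \<nu> \<nu>' = measure_of (space \<nu>) (sets \<nu>) (\<lambda>A. emeasure \<nu> A + emeasure \<nu>' A)"

lemma dom_measure_eq_sum_measure: "dom_measure \<nu> \<nu>' = sum_measure \<nu> \<nu>'"
  unfolding dom_measure_def sum_measure_def ..

lemma sets_sum_measure [simp]: "sets (sum_measure \<nu> \<nu>') = sets \<nu>"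
  unfolding sum_measure_def by (simp add: sets.space_closed)

lemma space_sum_measure [simp]: "space (sum_measure \<nu> \<nu>') = space \<nu>"
  using sets_eq_imp_space_eq[OF sets_sum_measure] .

lemma emeasure_sum_measure:
  assumes "sets \<nu>' = sets \<nu>" "A \<in> sets \<nu>"
  shows "emeasure (sum_measure \<nu> \<nu>') A = emeasure \<nu> A + emeasure \<nu>' A"
  unfolding sum_measure_def
proof (rule emeasure_measure_of_sigma)
  show "countably_additive (sets \<nu>) (\<lambda>A. emeasure \<nu> A + emeasure \<nu>' A)"
    using assms(1) by (auto simp: countably_additive_def suminf_add[symmetric] suminf_emeasure)
qed (auto simp: positive_def sets.sigma_algebra_axioms assms)

lemma finite_measure_sum_measure:
  assumes "finite_measure \<nu>" "finite_measure \<nu>'" "sets \<nu>' = sets \<nu>"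
  shows "finite_measure (sum_measure \<nu> \<nu>')"
proof (rule finite_measureI)
  have "space \<nu>' = space \<nu>"
    using assms(3) by (rule sets_eq_imp_space_eq)
  then show "emeasure (sum_measure \<nu> \<nu>') (space (sum_measure \<nu> \<nu>')) \<noteq> \<infinity>"
    using assms by (simp add: emeasure_sum_measure finite_measure.emeasure_finite)
qed

lemma measure_sum_measure:
  assumes "finite_measure \<nu>" "finite_measure \<nu>'" "sets \<nu>' = sets \<nu>" "A \<in> sets \<nu>"
  shows "measure (sum_measure \<nu> \<nu>') A = measure \<nu> A + measure \<nu>' A"
proof -
  have "emeasure \<nu> A < \<infinity>" "emeasure \<nu>' A < \<infinity>"
    using assms by (simp_all add: finite_measure.emeasure_finite less_top[symmetric])
  then show ?thesis
    using assms by (simp add: measure_def emeasure_sum_measure enn2real_plus)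
qed

lemma sum_measure_density_self:
  fixes f :: "'a \<Rightarrow> real"
  assumes "\<And>x. 0 \<le> f x" and [measurable]: "f \<in> borel_measurable M"
  shows "sum_measure (density M f) M = density M (\<lambda>x. 1 + f x)"
proof (rule measure_eqI)
  fix A assume "A \<in> sets (sum_measure (density M f) M)"
  then have A: "A \<in> sets M"
    by simp
  have "emeasure (sum_measure (density M f) M) A = emeasure (density M f) A + emeasure (density M (\<lambda>_. 1)) A"
    using A by (simp add: emeasure_sum_measure density_1)
  also have "\<dots> = emeasure (density M (\<lambda>x. 1 + f x)) A"
    using A assms(1) by (subst emeasure_density_add) (auto simp: add.commute ennreal_plus)
  finally show "emeasure (sum_measure (density M f) M) A = emeasure (density M (\<lambda>x. 1 + f x)) A" .
qed simp

lemma hellinger_density: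
  fixes M :: "real measure" and f :: "real \<Rightarrow> real"
  assumes "finite_measure M" "finite_measure (density M f)"
    and [measurable]: "f \<in> borel_measurable M" and f_nonneg: "\<And>x. 0 \<le> f x"
  shows "hellinger (density M f) M = enn2real (\<integral>\<^sup>+x. sqrt (f x) \<partial>M)"
proof -
  define D where "D = density M (\<lambda>x. 1 + f x)"
  have sum_eq: "sum_measure (density M f) M = D"
    unfolding D_def using f_nonneg by (rule sum_measure_density_self) simp
  interpret D: finite_measure D
    unfolding sum_eq[symmetric] using assms(1,2) by (intro finite_measure_sum_measure) simp_all
  have density_D: "density D (\<lambda>x. g x / (1 + f x)) = density M g"
    if [measurable]: "g \<in> borel_measurable M" and "\<And>x. 0 \<le> g x" for g
    unfolding D_def using that
    by (subst density_density_eq) (auto intro!: density_cong simp: f_nonneg ennreal_one_plus_mult_divide)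
  have "AE x in D. f x / (1 + f x) = RN_deriv D (density M f) x"
    using density_D[of f] by (intro D.RN_deriv_unique) (auto simp: D_def f_nonneg)
  moreover have "AE x in D. 1 / (1 + f x) = RN_deriv D M x"
    using density_D[of "\<lambda>_. 1"] by (intro D.RN_deriv_unique) (auto simp: D_def density_1)
  ultimately have "AE x in D. sqrt (enn2real (RN_deriv D (density M f) x) * enn2real (RN_deriv D M x))
      = sqrt (f x) / (1 + f x)"
  proof eventually_elim
    case (elim x)
    have "1 + f x > 0" using f_nonneg[of x] by linarith
    then have "(f x / (1 + f x)) * (1 / (1 + f x)) = (sqrt (f x) / (1 + f x))^2"
      using f_nonneg[of x] by (simp add: power_divide power2_eq_square)
    then show ?case
      using elim[symmetric] \<open>1 + f x > 0\<close> f_nonneg[of x] by simp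
  qed
  then have "(\<integral>\<^sup>+x. sqrt (enn2real (RN_deriv D (density M f) x) * enn2real (RN_deriv D M x)) \<partial>D)
      = (\<integral>\<^sup>+x. sqrt (f x) / (1 + f x) \<partial>D)"
    by (intro nn_integral_cong_AE) auto
  also have "\<dots> = (\<integral>\<^sup>+x. sqrt (f x) \<partial>M)"
    unfolding D_def
    by (subst nn_integral_density) (auto intro!: nn_integral_cong simp: f_nonneg ennreal_one_plus_mult_divide)
  finally show ?thesis
    unfolding hellinger_def dom_measure_eq_sum_measure sum_eq by simp
qed

lemma indicator_PiE_eq_prod:
  assumes "finite J" "x \<in> extensional J"
  shows "indicator (Pi\<^sub>E J A) x = (\<Prod>i\<in>J. indicator (A i) (x i) :: 'b :: comm_semiring_1)"
proof (cases "\<forall>i\<in>J. x i \<in> A i")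
  case False
  then obtain i where "i \<in> J" "x i \<notin> A i" by blast
  then have "(\<Prod>i\<in>J. indicator (A i) (x i) :: 'b) = 0"
    using assms(1) by (intro prod_zero bexI[of _ i]) auto
  with \<open>i \<in> J\<close> \<open>x i \<notin> A i\<close> show ?thesis by (auto simp: indicator_def PiE_iff)
qed (use assms(2) in \<open>auto simp: PiE_def\<close>)

lemma (in product_sigma_finite) PiM_density:
  assumes "finite J" and [measurable]: "\<And>i. f i \<in> borel_measurable (M i)"
    and "\<And>i. sigma_finite_measure (density (M i) (f i))"
  shows "PiM J (\<lambda>i. density (M i) (f i)) = density (PiM J M) (\<lambda>x. \<Prod>i\<in>J. f i (x i))"
proof (rule product_sigma_finite.PiM_eqI[symmetric])
  show "product_sigma_finite (\<lambda>i. density (M i) (f i))"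
    using assms(3) by (simp add: product_sigma_finite_def)
  fix A assume A: "\<And>i. i \<in> J \<Longrightarrow> A i \<in> sets (density (M i) (f i))"
  then have "Pi\<^sub>E J A \<in> sets (PiM J M)"
    using assms(1) by (intro sets_PiM_I_finite) auto
  then have "emeasure (density (PiM J M) (\<lambda>x. \<Prod>i\<in>J. f i (x i))) (Pi\<^sub>E J A)
      = (\<integral>\<^sup>+x. (\<Prod>i\<in>J. f i (x i) * indicator (A i) (x i)) \<partial>PiM J M)"
    using assms(1) by (auto simp: emeasure_density space_PiM PiE_iff indicator_PiE_eq_prod prod.distrib
        intro!: nn_integral_cong)
  also have "\<dots> = (\<Prod>i\<in>J. emeasure (density (M i) (f i)) (A i))"
    using A assms(1) by (subst product_nn_integral_prod) (auto simp: emeasure_density)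
  finally show "emeasure (density (PiM J M) (\<lambda>x. \<Prod>i\<in>J. f i (x i))) (Pi\<^sub>E J A)
      = (\<Prod>i\<in>J. emeasure (density (M i) (f i)) (A i))" .
qed (use assms(1) in \<open>auto intro!: sets_PiM_cong\<close>)

context product_prob_space
begin

lemma
  fixes g :: "'i \<Rightarrow> 'a \<Rightarrow> real"
  assumes J: "finite J" "J \<subseteq> I" and g: "\<And>i. i \<in> J \<Longrightarrow> integrable (M i) (g i)"
  shows integrable_PiM_prod: "integrable (PiM I M) (\<lambda>x. \<Prod>i\<in>J. g i (x i))"
    and integral_PiM_prod: "(\<integral>x. (\<Prod>i\<in>J. g i (x i)) \<partial>PiM I M) = (\<Prod>i\<in>J. \<integral>y. g i y \<partial>M i)"
proof -
  have restrict: "(\<lambda>x. restrict x J) \<in> measurable (PiM I M) (PiM J M)"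
      "distr (PiM I M) (PiM J M) (\<lambda>x. restrict x J) = PiM J M"
    using J by (auto intro: measurable_restrict_subset distr_PiM_restrict_finite)
  have [measurable]: "(\<lambda>y. \<Prod>i\<in>J. g i (y i)) \<in> borel_measurable (PiM J M)"
    using g by measurable
  have "integrable (PiM J M) (\<lambda>y. \<Prod>i\<in>J. g i (y i))"
    using J g by (intro product_integrable_prod) auto
  then show "integrable (PiM I M) (\<lambda>x. \<Prod>i\<in>J. g i (x i))"
    using integrable_distr_eq[OF restrict(1), of "\<lambda>y. \<Prod>i\<in>J. g i (y i)"] restrict(2) by simp
  have "(\<integral>x. (\<Prod>i\<in>J. g i (x i)) \<partial>PiM I M) = (\<integral>y. (\<Prod>i\<in>J. g i (y i)) \<partial>PiM J M)"
    using integral_distr[OF restrict(1), of "\<lambda>y. \<Prod>i\<in>J. g i (y i)"] restrict(2) by simp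
  also have "\<dots> = (\<Prod>i\<in>J. \<integral>y. g i y \<partial>M i)"
    using J g by (intro product_integral_prod) auto
  finally show "(\<integral>x. (\<Prod>i\<in>J. g i (x i)) \<partial>PiM I M) = (\<Prod>i\<in>J. \<integral>y. g i y \<partial>M i)" .
qed

lemma emeasure_PiM_density_prod_emb:
  assumes [measurable]: "\<And>i. f i \<in> borel_measurable (M i)"
    and "\<And>i. prob_space (density (M i) (f i))"
    and J: "finite J" "J \<subseteq> I" and X: "X \<in> sets (PiM J M)"
  shows "emeasure (PiM I (\<lambda>i. density (M i) (f i))) (prod_emb I M J X)
    = emeasure (density (PiM I M) (\<lambda>x. \<Prod>i\<in>J. f i (x i))) (prod_emb I M J X)"
proof -
  interpret densities: product_prob_space "\<lambda>i. density (M i) (f i)" I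
    using assms(2) by (simp add: product_prob_space_def product_prob_space_axioms_def
        product_sigma_finite_def prob_space_imp_sigma_finite)
  have restrict: "(\<lambda>x. restrict x J) \<in> measurable (PiM I M) (PiM J M)"
      "distr (PiM I M) (PiM J M) (\<lambda>x. restrict x J) = PiM J M"
    using J by (auto intro: measurable_restrict_subset distr_PiM_restrict_finite)
  have "prod_emb I M J X = prod_emb I (\<lambda>i. density (M i) (f i)) J X"
    by (simp add: prod_emb_def)
  then have "emeasure (PiM I (\<lambda>i. density (M i) (f i))) (prod_emb I M J X)
      = emeasure (PiM J (\<lambda>i. density (M i) (f i))) X"
    using J X by (simp add: densities.emeasure_PiM_emb')
  also have "\<dots> = (\<integral>\<^sup>+y. (\<Prod>i\<in>J. f i (y i)) * indicator X y \<partial>PiM J M)"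
    using J X assms(2) by (simp add: PiM_density prob_space_imp_sigma_finite emeasure_density)
  also have "\<dots> = (\<integral>\<^sup>+x. (\<Prod>i\<in>J. f i (x i)) * indicator (prod_emb I M J X) x \<partial>PiM I M)"
    using X by (subst restrict(2)[symmetric], subst nn_integral_distr[OF restrict(1)])
      (auto intro!: nn_integral_cong simp: prod_emb_def indicator_def space_PiM)
  also have "\<dots> = emeasure (density (PiM I M) (\<lambda>x. \<Prod>i\<in>J. f i (x i))) (prod_emb I M J X)"
    using J X
    by (intro emeasure_density[symmetric] borel_measurable_prod_ennreal measurable_prod_emb)
      (auto intro!: measurable_compose[OF measurable_component_singleton])
  finally show ?thesis .
qed

end

lemma measure_density_eq_integral:
  fixes p :: "'a \<Rightarrow> real"
  assumes "integrable M p" "\<And>x. 0 \<le> p x" "G \<in> sets M"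
  shows "measure (density M p) G = (\<integral>x. p x * indicator G x \<partial>M)"
proof -
  have "emeasure (density M p) G = (\<integral>\<^sup>+x. ennreal (p x * indicator G x) \<partial>M)"
    using assms by (subst emeasure_density) (auto intro!: nn_integral_cong simp: indicator_def)
  also have "\<dots> = ennreal (\<integral>x. p x * indicator G x \<partial>M)"
    using assms by (intro nn_integral_eq_integral integrable_real_mult_indicator) auto
  finally show ?thesis
    using assms by (simp add: measure_def integral_nonneg)
qed

lemma measure_density_le_hellinger_bound:
  fixes p q :: "'a \<Rightarrow> real"
  assumes G: "G \<in> sets M"
    and p: "integrable M p" "\<And>x. 0 \<le> p x" and q: "integrable M q" "\<And>x. 0 \<le> q x"
    and pq: "integrable M (\<lambda>x. sqrt (p x * q x))"
  shows "measure (density M p) G \<le> 2 * measure (density M q) G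
    + 2 * ((\<integral>x. p x \<partial>M) + (\<integral>x. q x \<partial>M) - 2 * (\<integral>x. sqrt (p x * q x) \<partial>M))"
proof -
  have pointwise: "p x * indicator G x \<le> 2 * (q x * indicator G x) + 2 * (p x + q x - 2 * sqrt (p x * q x))" for x
  proof -
    have "sqrt (p x * (4 * q x)) \<le> (p x + 4 * q x) / 2" "sqrt (p x * q x) \<le> (p x + q x) / 2"
      using p(2) q(2) by (intro arith_geo_mean_sqrt; simp)+
    moreover have "sqrt (p x * (4 * q x)) = 2 * sqrt (p x * q x)"
      by (simp add: real_sqrt_mult)
    ultimately show ?thesis by (auto simp: indicator_def)
  qed
  have "(\<integral>x. p x * indicator G x \<partial>M)
      \<le> (\<integral>x. 2 * (q x * indicator G x) + 2 * (p x + q x - 2 * sqrt (p x * q x)) \<partial>M)"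
    using G p q pq pointwise by (intro integral_mono integrable_real_mult_indicator)
      (auto intro!: integrable_add integrable_diff integrable_mult_right integrable_real_mult_indicator)
  also have "\<dots> = 2 * (\<integral>x. q x * indicator G x \<partial>M)
      + 2 * ((\<integral>x. p x \<partial>M) + (\<integral>x. q x \<partial>M) - 2 * (\<integral>x. sqrt (p x * q x) \<partial>M))"
    using G p q pq by (simp add: integrable_real_mult_indicator)
  finally show ?thesis
    using G p q by (simp add: measure_density_eq_integral)
qed

lemma (in finite_measure) approx_UN_by_algebra:
  fixes A :: "nat \<Rightarrow> 'a set"
  assumes G: "algebra \<Omega> G" "G \<subseteq> sets M" and A_sets: "\<And>i. A i \<in> sets M"
    and approx: "\<And>i. \<forall>e>0. \<exists>B\<in>G. measure M (sym_diff (A i) B) < e" and "0 < e"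
  shows "\<exists>B\<in>G. measure M (sym_diff (\<Union>i. A i) B) < e"
proof -
  interpret G: algebra \<Omega> G by fact
  have "(\<lambda>n. measure M (\<Union>i<n. A i)) \<longlonglongrightarrow> measure M (\<Union>n. \<Union>i<n. A i)"
    using A_sets by (intro finite_Lim_measure_incseq monoI UN_mono) auto
  also have "(\<Union>n. \<Union>i<n. A i) = (\<Union>i. A i)"
    using lessI by blast
  finally have "\<forall>\<^sub>F n in sequentially. measure M (\<Union>i<n. A i) > measure M (\<Union>i. A i) - e / 2"
    using \<open>0 < e\<close> by (intro order_tendstoD) auto
  then obtain n where n: "measure M (\<Union>i<n. A i) > measure M (\<Union>i. A i) - e / 2"
    by (auto dest: eventually_happens)
  define d where "d = e / (2 * (real n + 1))"
  have "0 < d" "real n * d < e / 2"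
    using \<open>0 < e\<close> by (simp_all add: d_def field_simps)
  then have "\<forall>i. \<exists>B\<in>G. measure M (sym_diff (A i) B) < d"
    using approx by blast
  then obtain B where B: "\<And>i. B i \<in> G" "\<And>i. measure M (sym_diff (A i) (B i)) < d"
    by metis
  have B_sets: "B i \<in> sets M" for i
    using B(1) G(2) by auto
  have "sym_diff (\<Union>i. A i) (\<Union>i<n. B i)
      \<subseteq> ((\<Union>i. A i) - (\<Union>i<n. A i)) \<union> (\<Union>i<n. sym_diff (A i) (B i))"
    by blast
  then have "measure M (sym_diff (\<Union>i. A i) (\<Union>i<n. B i))
      \<le> measure M (((\<Union>i. A i) - (\<Union>i<n. A i)) \<union> (\<Union>i<n. sym_diff (A i) (B i)))"
    using A_sets B_sets by (intro finite_measure_mono) auto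
  also have "\<dots> \<le> measure M ((\<Union>i. A i) - (\<Union>i<n. A i)) + measure M (\<Union>i<n. sym_diff (A i) (B i))"
    using A_sets B_sets by (intro measure_Un_le) auto
  also have "\<dots> \<le> measure M ((\<Union>i. A i) - (\<Union>i<n. A i)) + (\<Sum>i<n. measure M (sym_diff (A i) (B i)))"
    using A_sets B_sets by (intro add_left_mono measure_UNION_le) auto
  also have "\<dots> \<le> (measure M (\<Union>i. A i) - measure M (\<Union>i<n. A i)) + real n * d"
    using A_sets B(2) sum_mono[of "{..<n}" "\<lambda>i. measure M (sym_diff (A i) (B i))" "\<lambda>_. d"]
    by (subst finite_measure_Diff) (auto intro: less_imp_le)
  also have "\<dots> < e"
    using n \<open>real n * d < e / 2\<close> by linarith
  finally have "measure M (sym_diff (\<Union>i. A i) (\<Union>i<n. B i)) < e" .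
  moreover have "(\<Union>i<n. B i) \<in> G"
    by (intro G.finite_UN) (auto simp: B(1))
  ultimately show ?thesis
    by blast
qed

lemma (in finite_measure) approx_by_generating_algebra:
  assumes G: "algebra \<Omega> G" and sets_eq: "sets M = sigma_sets \<Omega> G" and "A \<in> sets M" and "0 < e"
  obtains B where "B \<in> G" "measure M (sym_diff A B) < e"
proof -
  interpret G: algebra \<Omega> G by fact
  have "Int_stable G"
    using G.Int by (auto simp: Int_stable_def)
  from this G.space_closed \<open>A \<in> sets M\<close>[unfolded sets_eq]
  have "\<forall>e>0. \<exists>B\<in>G. measure M (sym_diff A B) < e"
  proof (induction rule: sigma_sets_induct_disjoint)
    case (basic A)
    then show ?case by (auto intro!: bexI[of _ A])
  next
    case empty
    then show ?case by (auto intro!: bexI[of _ "{}"])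
  next
    case (compl A)
    have "A \<subseteq> \<Omega>"
      using compl.hyps sigma_sets_into_sp[OF G.space_closed] by blast
    show ?case
    proof (intro allI impI)
      fix e :: real assume "0 < e"
      with compl.IH obtain B where "B \<in> G" "measure M (sym_diff A B) < e"
        by blast
      moreover have "sym_diff (\<Omega> - A) (\<Omega> - B) = sym_diff A B"
        using \<open>A \<subseteq> \<Omega>\<close> \<open>B \<in> G\<close> G.sets_into_space by blast
      ultimately show "\<exists>B\<in>G. measure M (sym_diff (\<Omega> - A) B) < e"
        by (metis G.compl_sets)
    qed
  next
    case (union A)
    then show ?case
      using sets_eq by (intro allI impI approx_UN_by_algebra[OF G]) auto
  qed
  with \<open>0 < e\<close> that show ?thesis
    by blast
qed

lemma sqrt_prod_mult_prod_subset:
  fixes h :: "'i \<Rightarrow> real"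
  assumes "finite K" "L \<subseteq> K" "\<And>i. 0 \<le> h i"
  shows "sqrt ((\<Prod>i\<in>K. h i) * (\<Prod>i\<in>L. h i)) = (\<Prod>i\<in>K. if i \<in> L then h i else sqrt (h i))"
proof -
  have "(\<Prod>i\<in>K. if i \<in> L then h i else sqrt (h i))\<^sup>2 = (\<Prod>i\<in>K. h i * (if i \<in> L then h i else 1))"
    unfolding prod_power_distrib by (intro prod.cong refl) (simp add: assms(3) power2_eq_square)
  also have "\<dots> = (\<Prod>i\<in>K. h i) * (\<Prod>i\<in>L. h i)"
    using assms(1,2) by (simp add: prod.distrib prod.If_cases Int_absorb1 Int_absorb2)
  finally show ?thesis
    using assms(3) by (intro real_sqrt_unique prod_nonneg) auto
qed

lemma one_minus_prod_le_sum:
  fixes h :: "'i \<Rightarrow> real"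
  assumes "finite S" "\<And>i. i \<in> S \<Longrightarrow> 0 \<le> h i \<and> h i \<le> 1"
  shows "1 - (\<Prod>i\<in>S. h i) \<le> (\<Sum>i\<in>S. 1 - h i)"
  using assms
proof (induction S rule: finite_induct)
  case (insert j S)
  have "0 \<le> (\<Prod>i\<in>S. h i)" "(\<Prod>i\<in>S. h i) \<le> 1"
    using insert.prems by (auto intro: prod_nonneg prod_le_1)
  then have "0 \<le> (1 - h j) * (1 - (\<Prod>i\<in>S. h i))"
    using insert.prems[of j] by simp
  then have "1 - h j * (\<Prod>i\<in>S. h i) \<le> (1 - h j) + (1 - (\<Prod>i\<in>S. h i))"
    by (simp add: algebra_simps)
  then show ?case
    using insert by auto
qed simp

lemma sum_le_suminf_minus_initial:
  fixes a :: "nat \<Rightarrow> real"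
  assumes "summable a" "\<And>i. 0 \<le> a i" "finite S" "S \<subseteq> {N<..}"
  shows "(\<Sum>i\<in>S. a i) \<le> suminf a - (\<Sum>i\<le>N. a i)"
proof -
  have "(\<Sum>i\<in>S. a i) + (\<Sum>i\<le>N. a i) = (\<Sum>i\<in>S \<union> {..N}. a i)"
    using assms(3,4) by (subst sum.union_disjoint) auto
  also have "\<dots> \<le> suminf a"
    using assms by (intro sum_le_suminf) auto
  finally show ?thesis
    by simp
qed

lemma (in finite_measure) measure_le_plus_sym_diff:
  assumes "A \<in> sets M" "B \<in> sets M"
  shows "measure M A \<le> measure M B + measure M (sym_diff A B)"
proof -
  have "measure M A \<le> measure M (B \<union> sym_diff A B)"
    using assms by (intro finite_measure_mono) auto
  also have "\<dots> \<le> measure M B + measure M (sym_diff A B)"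
    using assms by (intro measure_Un_le) auto
  finally show ?thesis .
qed

lemma measure_le_from_generating_algebra:
  assumes G: "algebra \<Omega> G" and P: "finite_measure P" and Q: "finite_measure Q"
    and sets_P: "sets P = sigma_sets \<Omega> G" and sets_Q: "sets Q = sigma_sets \<Omega> G" and "0 \<le> c"
    and le: "\<And>B. B \<in> G \<Longrightarrow> measure P B \<le> c * measure Q B + r"
    and A: "A \<in> sigma_sets \<Omega> G"
  shows "measure P A \<le> c * measure Q A + r"
proof (rule field_le_epsilon)
  fix e :: real assume "0 < e"
  interpret P: finite_measure P by fact
  interpret Q: finite_measure Q by fact
  define \<mu> where "\<mu> = sum_measure P Q"
  interpret \<mu>: finite_measure \<mu>
    unfolding \<mu>_def using P Q sets_P sets_Q by (intro finite_measure_sum_measure) auto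
  obtain B where B: "B \<in> G" and B_close: "measure \<mu> (sym_diff A B) < e / (1 + c)"
    by (rule \<mu>.approx_by_generating_algebra[OF G, where e="e / (1 + c)"])
      (use A sets_P \<open>0 < e\<close> \<open>0 \<le> c\<close> in \<open>auto simp: \<mu>_def\<close>)
  have A_sets: "A \<in> sets P" and B_sets: "B \<in> sets P"
    using A B sets_P by auto
  then have "sym_diff A B \<in> sets P"
    by auto
  then have "measure \<mu> (sym_diff A B) = measure P (sym_diff A B) + measure Q (sym_diff A B)"
    unfolding \<mu>_def using sets_P sets_Q by (intro measure_sum_measure[OF P Q]) simp_all
  then have "measure P (sym_diff A B) + c * measure Q (sym_diff A B) \<le> (1 + c) * measure \<mu> (sym_diff A B)"
    using mult_nonneg_nonneg[OF \<open>0 \<le> c\<close> measure_nonneg[of P "sym_diff A B"]]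
      measure_nonneg[of Q "sym_diff A B"] by (simp add: algebra_simps)
  also have "\<dots> < e"
    using B_close \<open>0 \<le> c\<close> by (simp add: field_simps)
  finally have small: "measure P (sym_diff A B) + c * measure Q (sym_diff A B) < e" .
  have "measure P A \<le> measure P B + measure P (sym_diff A B)"
    using A_sets B_sets by (rule P.measure_le_plus_sym_diff)
  moreover have "c * measure Q B \<le> c * measure Q A + c * measure Q (sym_diff A B)"
    using Q.measure_le_plus_sym_diff[of B A] A_sets B_sets sets_P sets_Q \<open>0 \<le> c\<close>
    by (simp add: Un_commute distrib_left[symmetric] mult_left_mono)
  ultimately show "measure P A \<le> c * measure Q A + r + e"
    using le[OF B] small by linarith
qed

locale prob_density_sequence =
  fixes M :: "'a measure" and f :: "nat \<Rightarrow> 'a \<Rightarrow> real"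
  assumes prob_space_M: "prob_space M"
    and measurable_f [measurable]: "\<And>i. f i \<in> borel_measurable M"
    and f_nonneg: "\<And>i x. 0 \<le> f i x"
    and prob_space_density: "\<And>i. prob_space (density M (f i))"
begin

sublocale prob_space M
  by (rule prob_space_M)

lemma product_prob_space_M: "product_prob_space (\<lambda>_. M)"
  unfolding product_prob_space_def product_prob_space_axioms_def product_sigma_finite_def
  using prob_space_M prob_space_imp_sigma_finite by blast

lemma product_prob_space_density: "product_prob_space (\<lambda>i. density M (f i))"
  unfolding product_prob_space_def product_prob_space_axioms_def product_sigma_finite_def
  using prob_space_density prob_space_imp_sigma_finite by blast

lemma nn_integral_f: "(\<integral>\<^sup>+x. f i x \<partial>M) = 1"
  using prob_space.emeasure_space_1[OF prob_space_density[of i]]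
  by (simp add: emeasure_density)

lemma integrable_f: "integrable M (f i)"
  by (rule integrableI_nn_integral_finite[of _ _ 1]) (auto simp: nn_integral_f f_nonneg)

lemma integral_f: "(\<integral>x. f i x \<partial>M) = 1"
  by (subst integral_eq_nn_integral) (auto simp: nn_integral_f f_nonneg)

lemma sqrt_f_le: "sqrt (f i x) \<le> (1 + f i x) / 2"
  using arith_geo_mean_sqrt[of "f i x" 1] f_nonneg[of i x] by simp

lemma integrable_sqrt_f: "integrable M (\<lambda>x. sqrt (f i x))"
proof (rule Bochner_Integration.integrable_bound[where f="\<lambda>x. 1 + f i x"])
  show "AE x in M. norm (sqrt (f i x)) \<le> norm (1 + f i x)"
  proof (intro AE_I2)
    fix x
    have "sqrt (f i x) \<le> 1 + f i x"
      using f_nonneg[of i x] by (intro order_trans[OF sqrt_f_le]) simp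
    then show "norm (sqrt (f i x)) \<le> norm (1 + f i x)"
      using f_nonneg[of i x] by simp
  qed
qed (use integrable_f[of i] in auto)

definition affinity :: "nat \<Rightarrow> real" where
  "affinity i = (\<integral>x. sqrt (f i x) \<partial>M)"

lemma affinity_nonneg: "0 \<le> affinity i"
  unfolding affinity_def by (intro integral_nonneg_AE AE_I2) (simp add: f_nonneg)

lemma affinity_le_1: "affinity i \<le> 1"
proof -
  have "affinity i \<le> (\<integral>x. (1 + f i x) / 2 \<partial>M)"
    unfolding affinity_def
    using integrable_sqrt_f integrable_f by (intro integral_mono sqrt_f_le) auto
  also have "\<dots> = 1"
    using integrable_f[of i] by (simp add: integral_f prob_space)
  finally show ?thesis .
qed

lemma measure_cylinder_le_hellinger:
  assumes K: "finite K" "K \<subseteq> I" and "L \<subseteq> K" and X: "X \<in> sets (PiM K (\<lambda>_. M))"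
  shows "measure (PiM I (\<lambda>i. density M (f i))) (prod_emb I (\<lambda>_. M) K X)
    \<le> 2 * measure (density (PiM I (\<lambda>_. M)) (\<lambda>x. \<Prod>i\<in>L. f i (x i))) (prod_emb I (\<lambda>_. M) K X)
      + 4 * (1 - (\<Prod>i\<in>K - L. affinity i))"
proof -
  interpret P: product_prob_space "\<lambda>_. M" I
    by (rule product_prob_space_M)
  define p where "p x = (\<Prod>i\<in>K. f i (x i))" for x
  define q where "q x = (\<Prod>i\<in>L. f i (x i))" for x
  define g where "g i y = (if i \<in> L then f i y else sqrt (f i y))" for i y
  have L: "finite L" "L \<subseteq> I"
    using K \<open>L \<subseteq> K\<close> by (auto intro: finite_subset)
  have cylinder: "prod_emb I (\<lambda>_. M) K X \<in> sets (PiM I (\<lambda>_. M))"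
    using K X by (intro measurable_prod_emb)
  have p_nonneg: "0 \<le> p x" and q_nonneg: "0 \<le> q x" for x
    unfolding p_def q_def by (simp_all add: prod_nonneg f_nonneg)
  have "emeasure (PiM I (\<lambda>i. density M (f i))) (prod_emb I (\<lambda>_. M) K X)
      = emeasure (density (PiM I (\<lambda>_. M)) p) (prod_emb I (\<lambda>_. M) K X)"
    using K X prob_space_density
    by (simp add: P.emeasure_PiM_density_prod_emb p_def prod_ennreal f_nonneg)
  then have measure_eq: "measure (PiM I (\<lambda>i. density M (f i))) (prod_emb I (\<lambda>_. M) K X)
      = measure (density (PiM I (\<lambda>_. M)) p) (prod_emb I (\<lambda>_. M) K X)"
    by (simp add: measure_def)
  have sqrt_pq: "sqrt (p x * q x) = (\<Prod>i\<in>K. g i (x i))" for x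
    unfolding p_def q_def g_def using K(1) \<open>L \<subseteq> K\<close> f_nonneg by (rule sqrt_prod_mult_prod_subset)
  have g_integrable: "integrable M (g i)" for i
    unfolding g_def by (cases "i \<in> L") (simp_all add: integrable_f integrable_sqrt_f)
  have "(\<integral>x. sqrt (p x * q x) \<partial>PiM I (\<lambda>_. M)) = (\<Prod>i\<in>K. \<integral>y. g i y \<partial>M)"
    unfolding sqrt_pq using K g_integrable by (intro P.integral_PiM_prod) auto
  also have "\<dots> = (\<Prod>i\<in>K. if i \<in> L then 1 else affinity i)"
    by (intro prod.cong refl) (simp add: g_def integral_f affinity_def)
  also have "\<dots> = (\<Prod>i\<in>K - L. affinity i)"
    using K(1) by (simp add: prod.If_cases Diff_eq)
  finally have integral_sqrt_pq: "(\<integral>x. sqrt (p x * q x) \<partial>PiM I (\<lambda>_. M)) = (\<Prod>i\<in>K - L. affinity i)" .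
  have integrable: "integrable (PiM I (\<lambda>_. M)) p" "integrable (PiM I (\<lambda>_. M)) q"
      "integrable (PiM I (\<lambda>_. M)) (\<lambda>x. sqrt (p x * q x))"
    unfolding sqrt_pq unfolding p_def q_def using K L integrable_f g_integrable
    by (auto intro!: P.integrable_PiM_prod)
  have "(\<integral>x. p x \<partial>PiM I (\<lambda>_. M)) = 1" "(\<integral>x. q x \<partial>PiM I (\<lambda>_. M)) = 1"
    using K L integrable_f by (simp_all add: p_def q_def P.integral_PiM_prod integral_f)
  then have "measure (density (PiM I (\<lambda>_. M)) p) (prod_emb I (\<lambda>_. M) K X)
      \<le> 2 * measure (density (PiM I (\<lambda>_. M)) q) (prod_emb I (\<lambda>_. M) K X)
        + 4 * (1 - (\<Prod>i\<in>K - L. affinity i))"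
    using measure_density_le_hellinger_bound[OF cylinder integrable(1) p_nonneg integrable(2) q_nonneg
        integrable(3)] integral_sqrt_pq by simp
  then show ?thesis
    unfolding measure_eq q_def .
qed

definition hellinger_tail :: "nat \<Rightarrow> real" where
  "hellinger_tail N = (\<Sum>i. 1 - affinity i) - (\<Sum>i\<le>N. 1 - affinity i)"

lemma hellinger_tail_tendsto_0:
  assumes "summable (\<lambda>i. 1 - affinity i)"
  shows "hellinger_tail \<longlonglongrightarrow> 0"
  using tendsto_diff[OF tendsto_const[of "\<Sum>i. 1 - affinity i"] summable_LIMSEQ'[OF assms]]
  unfolding hellinger_tail_def by simp

lemma measure_cylinder_le_hellinger_tail:
  assumes summable: "summable (\<lambda>i. 1 - affinity i)"
    and J: "finite J" "J \<subseteq> I" and X: "X \<in> sets (PiM J (\<lambda>_. M))"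
  shows "measure (PiM I (\<lambda>i. density M (f i))) (prod_emb I (\<lambda>_. M) J X)
    \<le> 2 * measure (density (PiM I (\<lambda>_. M)) (\<lambda>x. \<Prod>i\<in>I \<inter> {..N}. f i (x i))) (prod_emb I (\<lambda>_. M) J X)
      + 4 * hellinger_tail N"
proof -
  define K where "K = J \<union> (I \<inter> {..N})"
  have K: "finite K" "K \<subseteq> I" "I \<inter> {..N} \<subseteq> K" "J \<subseteq> K"
    using J by (auto simp: K_def)
  have "1 - (\<Prod>i\<in>K - I \<inter> {..N}. affinity i) \<le> (\<Sum>i\<in>K - I \<inter> {..N}. 1 - affinity i)"
    using K(1) affinity_nonneg affinity_le_1 by (intro one_minus_prod_le_sum) auto
  also have "\<dots> \<le> hellinger_tail N"
    unfolding hellinger_tail_def using summable K(1,2) affinity_le_1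
    by (intro sum_le_suminf_minus_initial) auto
  finally have "1 - (\<Prod>i\<in>K - I \<inter> {..N}. affinity i) \<le> hellinger_tail N" .
  moreover have "prod_emb K (\<lambda>_. M) J X \<in> sets (PiM K (\<lambda>_. M))"
    using K X by (intro measurable_prod_emb)
  ultimately show ?thesis
    using measure_cylinder_le_hellinger[OF K(1,2,3), of "prod_emb K (\<lambda>_. M) J X"] K J by simp
qed

lemma measure_null_set_le_hellinger_tail:
  assumes summable: "summable (\<lambda>i. 1 - affinity i)" and A: "A \<in> null_sets (PiM I (\<lambda>_. M))"
  shows "measure (PiM I (\<lambda>i. density M (f i))) A \<le> 4 * hellinger_tail N"
proof -
  interpret P0: product_prob_space "\<lambda>_. M" I
    by (rule product_prob_space_M)
  define q where "q x = (\<Prod>i\<in>I \<inter> {..N}. f i (x i))" for x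
  define Q where "Q = density (PiM I (\<lambda>_. M)) q"
  have q_integrable: "integrable (PiM I (\<lambda>_. M)) q" and q_nonneg: "0 \<le> q x" for x
    unfolding q_def using integrable_f by (auto intro!: P0.integrable_PiM_prod prod_nonneg f_nonneg)
  have "finite_measure Q"
    unfolding Q_def using q_integrable q_nonneg
    by (intro finite_measureI) (simp add: emeasure_density nn_integral_eq_integral)
  have "emeasure Q A = 0"
    unfolding Q_def using A null_setsD2[OF A] q_integrable
    by (simp add: emeasure_density nn_integral_null_set)
  have "measure (PiM I (\<lambda>i. density M (f i))) A \<le> 2 * measure Q A + 4 * hellinger_tail N"
  proof (rule measure_le_from_generating_algebra[OF P0.algebra_generator _ \<open>finite_measure Q\<close>])
    have "prob_space (PiM I (\<lambda>i. density M (f i)))"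
      by (intro prob_space_PiM prob_space_density)
    then show "finite_measure (PiM I (\<lambda>i. density M (f i)))"
      by (simp add: prob_space_def)
    show "sets (PiM I (\<lambda>i. density M (f i))) = sigma_sets (space (PiM I (\<lambda>_. M))) P0.generator"
      using sets_PiM_cong[of I I "\<lambda>i. density M (f i)" "\<lambda>_. M"] by (simp add: P0.sets_PiM_generator)
    show "sets Q = sigma_sets (space (PiM I (\<lambda>_. M))) P0.generator"
      by (simp add: Q_def P0.sets_PiM_generator)
    show "A \<in> sigma_sets (space (PiM I (\<lambda>_. M))) P0.generator"
      using A by (auto simp: P0.sets_PiM_generator[symmetric])
    fix B assume "B \<in> P0.generator"
    then show "measure (PiM I (\<lambda>i. density M (f i))) B \<le> 2 * measure Q B + 4 * hellinger_tail N"
      unfolding Q_def q_def by (auto elim!: P0.generator.cases intro!: measure_cylinder_le_hellinger_tail[OF summable])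
  qed simp
  with \<open>emeasure Q A = 0\<close> show ?thesis
    by (simp add: measure_def)
qed

theorem absolutely_continuous_PiM:
  assumes "summable (\<lambda>i. 1 - affinity i)"
  shows "absolutely_continuous (PiM I (\<lambda>_. M)) (PiM I (\<lambda>i. density M (f i)))"
  unfolding absolutely_continuous_def
proof
  fix A assume A: "A \<in> null_sets (PiM I (\<lambda>_. M))"
  interpret P: product_prob_space "\<lambda>i. density M (f i)" I
    by (rule product_prob_space_density)
  have "(\<lambda>N. 4 * hellinger_tail N) \<longlonglongrightarrow> 0"
    using hellinger_tail_tendsto_0[OF assms] by (rule tendsto_mult_right_zero)
  then have "measure (PiM I (\<lambda>i. density M (f i))) A \<le> 0"
    by (rule tendsto_le[OF sequentially_bot _ tendsto_const])
      (intro always_eventually allI measure_null_set_le_hellinger_tail[OF assms A])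
  then have "emeasure (PiM I (\<lambda>i. density M (f i))) A = 0"
    using measure_nonneg[of "PiM I (\<lambda>i. density M (f i))" A] by (simp add: P.emeasure_eq_measure)
  moreover have "sets (PiM I (\<lambda>i. density M (f i))) = sets (PiM I (\<lambda>_. M))"
    by (intro sets_PiM_cong) auto
  ultimately show "A \<in> null_sets (PiM I (\<lambda>i. density M (f i)))"
    using A by (intro null_setsI) auto
qed

end

lemma density_enn2real_RN_deriv:
  assumes "sigma_finite_measure M" "sigma_finite_measure N"
    and "absolutely_continuous M N" "sets N = sets M"
  shows "density M (\<lambda>x. enn2real (RN_deriv M N x)) = N"
proof -
  interpret M: sigma_finite_measure M by fact
  have "AE x in M. RN_deriv M N x = ennreal (enn2real (RN_deriv M N x))"
    using M.RN_deriv_finite[OF assms(2-4)] by eventually_elim (simp add: ennreal_enn2real_if)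
  then have "density M (\<lambda>x. enn2real (RN_deriv M N x)) = density M (RN_deriv M N)"
    by (intro density_cong) auto
  also have "\<dots> = N"
    using M.density_RN_deriv[OF assms(3,4)] .
  finally show ?thesis .
qed

lemma summable_if_ereal_le_cmult_summable:
  fixes a :: "nat \<Rightarrow> real" and b :: "nat \<Rightarrow> ereal"
  assumes "\<And>n. 0 \<le> a n" "\<And>n. 0 \<le> b n" "0 \<le> C" "\<And>n. ereal (a n) \<le> ereal C * b n"
    and "(\<Sum>n. b n) < \<infinity>"
  shows "summable a"
proof -
  have "(\<Sum>n. ereal (a n)) \<le> (\<Sum>n. ereal C * b n)"
    using assms by (intro suminf_le_pos) auto
  also have "\<dots> = ereal C * (\<Sum>n. b n)"
    using assms by (intro suminf_cmult_ereal) auto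
  also have "\<dots> < \<infinity>"
    using assms(5) suminf_0_le[of b] assms(2) by (cases "\<Sum>n. b n") auto
  finally show ?thesis
    using summable_real_of_ereal[of "\<lambda>n. ereal (a n)"] assms(1) by simp
qed

lemma summable_one_minus_hellinger_if_class_D:
  assumes "class_D d" "\<And>n. prob_on_unit (\<mu> n)" "prob_on_unit \<mu>0"
    and "\<And>n. hellinger (\<mu> n) \<mu>0 \<le> 1" and "(\<Sum>n. d (\<mu> n) \<mu>0) < \<infinity>"
  shows "summable (\<lambda>n. 1 - hellinger (\<mu> n) \<mu>0)"
proof -
  from assms(1) obtain C where "0 < C" and C: "\<And>\<mu> \<mu>'. prob_on_unit \<mu> \<Longrightarrow> prob_on_unit \<mu>' \<Longrightarrow>
      ereal (1 - hellinger \<mu> \<mu>') \<le> ereal C * d \<mu> \<mu>'"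
    unfolding class_D_def by blast
  have "0 \<le> d (\<mu> n) \<mu>0" for n
    using assms(1) assms(2)[of n] assms(3)
    unfolding class_D_def is_divergence_def is_distance_def by blast
  then show ?thesis
    using \<open>0 < C\<close> C[OF assms(2) assms(3)] assms(4,5)
    by (intro summable_if_ereal_le_cmult_summable[where C=C]) auto
qed

theorem lemma1:
  fixes \<nu> :: "nat \<Rightarrow> real measure" and d :: "real measure \<Rightarrow> real measure \<Rightarrow> ereal"
  assumes "\<And>n. prob_on_unit (\<nu> n)"
    and "\<And>n. n \<ge> 1 \<Longrightarrow> absolutely_continuous (\<nu> 0) (\<nu> n)"
    and "class_D d"
    and "(\<Sum>n. d (\<nu> (Suc n)) (\<nu> 0)) < \<infinity>"
  shows "absolutely_continuous (\<Pi>\<^sub>M n\<in>{1..}. \<nu> 0) (\<Pi>\<^sub>M n\<in>{1..}. \<nu> n)"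
proof -
  define f where "f n x = enn2real (RN_deriv (\<nu> 0) (\<nu> n) x)" for n x
  have prob: "prob_space (\<nu> n)" and "sets (\<nu> n) = sets (\<nu> 0)" for n
    using assms(1)[of n] assms(1)[of 0] by (auto simp: prob_on_unit_def)
  moreover have "absolutely_continuous (\<nu> 0) (\<nu> n)" for n
    using assms(2)[of n] by (cases n) (auto simp: absolutely_continuous_def)
  ultimately have density_f: "density (\<nu> 0) (f n) = \<nu> n" for n
    unfolding f_def by (intro density_enn2real_RN_deriv) (auto simp: prob_space_imp_sigma_finite)
  interpret prob_density_sequence "\<nu> 0" f
  proof (rule prob_density_sequence.intro)
    show "f i \<in> borel_measurable (\<nu> 0)" "0 \<le> f i x" for i x
      unfolding f_def by simp_all
  qed (simp_all add: prob density_f)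
  have hellinger_eq: "hellinger (\<nu> n) (\<nu> 0) = affinity n" for n
    using hellinger_density[of "\<nu> 0" "f n"] prob[of n] density_f
    by (simp add: finite_measure_axioms prob_space_def affinity_def f_nonneg integral_eq_nn_integral)
  have "summable (\<lambda>n. 1 - affinity (Suc n))"
    using summable_one_minus_hellinger_if_class_D[OF assms(3) assms(1) assms(1) _ assms(4)]
    by (simp add: hellinger_eq affinity_le_1)
  then have "summable (\<lambda>n. 1 - affinity n)"
    using summable_Suc_iff[of "\<lambda>n. 1 - affinity n"] by simp
  then have "absolutely_continuous (\<Pi>\<^sub>M n\<in>{1..}. \<nu> 0) (\<Pi>\<^sub>M n\<in>{1..}. density (\<nu> 0) (f n))"
    by (rule absolutely_continuous_PiM)
  then show ?thesis
    by (simp add: density_f)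
qed

end
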